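(* Consider the disclosure model described in the context with a fixed, commonly known type $\theta\in\Theta$ (no information asymmetry). Let $\underline{\mathbf{e}}(\theta):=\min\{e\in E:\pi(\theta,e)\ge\pi(\theta,\bar e)\}$. An emission level $e^*\in E$ can be implemented (i.e., there exists $d\in\mathcal{D}$ such that $e^*$ is belief-compatible under $d$ and maximizes $\pi(\theta,\cdot)$ over $\tilde E_d$) if and only if $e^*\ge\underline{\mathbf{e}}(\theta)$. Moreover, any such $e^*$ is implemented by the binary disclosure policy \[d(e)=\begin{cases}e^*,& e\le e^*,\\ \bar e,& e>e^*.\end{cases}\]
   Context: Emissions lie in $E=[0,\bar e]\subset\mathbb{R}_+$ with $\bar e>0$; types lie in $\Theta=[\underline\theta,\bar\theta]$. The firm's profit is $\tilde\pi(\theta,e,\tilde e)$, where $e$ is the actual emission and $\tilde e\in E$ the emission perceived by the market; for each $\theta$ it is strictly increasing in $e$ and strictly decreasing in $\tilde e$. Standing assumptions: $\tilde\pi$ is continuous on $\Theta\times E\times E$ and $C^2$ on its interior; $\pi(\theta,e):=\tilde\pi(\theta,e,e)$ is strictly concave in $e$ for each $\theta$; and $\pi(\theta,0)<\pi(\theta,\bar e)$ for all $\theta$. A disclosure policy is a function $d:E\to E$ (the partition of $E$ into its level sets). An emission level $e$ is belief-compatible under $d$ if $e\ge e'$ for all $e'$ with $d(e')=d(e)$. Let $\tilde E_d$ be the set of belief-compatible levels. The firm of type $\theta$ effectively chooses $e\in\tilde E_d$ to maximize $\pi(\theta,e)$, because the market believes the firm chose the highest emission consistent with the disclosure. $\mathcal{D}$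 is the set of policies for which this maximum is attained for every type. *)

theory Defs
  imports "HOL-Analysis.Analysis"
begin

definition strictly_concave_on :: "real set \<Rightarrow> (real \<Rightarrow> real) \<Rightarrow> bool" where
  "strictly_concave_on S f \<longleftrightarrow> convex S \<and>
     (\<forall>x\<in>S. \<forall>y\<in>S. x \<noteq> y \<longrightarrow> (\<forall>t. 0 < t \<and> t < 1 \<longrightarrow>
        f (t * x + (1 - t) * y) > t * f x + (1 - t) * f y))"

definition C2_on :: "'a::real_normed_vector set \<Rightarrow> ('a \<Rightarrow> real) \<Rightarrow> bool" where
  "C2_on S f \<longleftrightarrow> (\<exists>D D2.
     (\<forall>x\<in>S. (f has_derivative blinfun_apply (D x)) (at x)) \<and>
     (\<forall>x\<in>S. (D has_derivative blinfun_apply (D2 x)) (at x)) \<and>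
     continuous_on S D \<and> continuous_on S D2)"

abbreviation Eset :: "real \<Rightarrow> real set" where
  "Eset ebar \<equiv> {0..ebar}"

definition profit :: "(real \<Rightarrow> real \<Rightarrow> real \<Rightarrow> real) \<Rightarrow> real \<Rightarrow> real \<Rightarrow> real" where
  "profit pit \<theta> e = pit \<theta> e e"

definition disclosure_policy :: "real \<Rightarrow> (real \<Rightarrow> real) \<Rightarrow> bool" where
  "disclosure_policy ebar d \<longleftrightarrow> (\<forall>e\<in>Eset ebar. d e \<in> Eset ebar)"

definition belief_compatible :: "real \<Rightarrow> (real \<Rightarrow> real) \<Rightarrow> real \<Rightarrow> bool" where
  "belief_compatible ebar d e \<longleftrightarrow> e \<in> Eset ebar \<and>
     (\<forall>e'\<in>Eset ebar. d e' = d e \<longrightarrow> e' \<le> e)"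

definition bc_set :: "real \<Rightarrow> (real \<Rightarrow> real) \<Rightarrow> real set" where
  "bc_set ebar d = {e. belief_compatible ebar d e}"

definition policy_class :: "(real \<Rightarrow> real \<Rightarrow> real \<Rightarrow> real) \<Rightarrow> real set \<Rightarrow> real \<Rightarrow> (real \<Rightarrow> real) set" where
  "policy_class pit Theta ebar = {d. disclosure_policy ebar d \<and>
     (\<forall>\<theta>\<in>Theta. \<exists>e\<in>bc_set ebar d. \<forall>e'\<in>bc_set ebar d. profit pit \<theta> e' \<le> profit pit \<theta> e)}"

definition implements :: "(real \<Rightarrow> real \<Rightarrow> real \<Rightarrow> real) \<Rightarrow> real set \<Rightarrow> real \<Rightarrow> real \<Rightarrow> (real \<Rightarrow> real) \<Rightarrow> real \<Rightarrow> bool" where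
  "implements pit Theta ebar \<theta> d estar \<longleftrightarrow> d \<in> policy_class pit Theta ebar \<and>
     estar \<in> bc_set ebar d \<and> (\<forall>e\<in>bc_set ebar d. profit pit \<theta> e \<le> profit pit \<theta> estar)"

definition implementable :: "(real \<Rightarrow> real \<Rightarrow> real \<Rightarrow> real) \<Rightarrow> real set \<Rightarrow> real \<Rightarrow> real \<Rightarrow> real \<Rightarrow> bool" where
  "implementable pit Theta ebar \<theta> estar \<longleftrightarrow> (\<exists>d. implements pit Theta ebar \<theta> d estar)"

definition e_low :: "(real \<Rightarrow> real \<Rightarrow> real \<Rightarrow> real) \<Rightarrow> real \<Rightarrow> real \<Rightarrow> real" where
  "e_low pit ebar \<theta> = (LEAST e. e \<in> Eset ebar \<and> profit pit \<theta> e \<ge> profit pit \<theta> ebar)"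

definition binary_policy :: "real \<Rightarrow> real \<Rightarrow> real \<Rightarrow> real" where
  "binary_policy ebar estar e = (if e \<le> estar then estar else ebar)"

end

theory Submission
  imports Defs
begin

text \<open>The maximal emission \<open>ebar\<close> is belief-compatible under every policy, so a firm facing a
  policy that implements \<open>e*\<close> can always fall back on \<open>ebar\<close>; hence \<open>\<pi>(\<theta>,e*) \<ge> \<pi>(\<theta>,ebar)\<close>,
  i.e. \<open>e* \<ge> e_low \<theta>\<close>. Conversely, under the binary policy the only belief-compatible levels
  are \<open>e*\<close> and \<open>ebar\<close>, and concavity of \<open>\<pi>(\<theta>,\<cdot>)\<close> on \<open>[e_low \<theta>, ebar]\<close> gives
  \<open>\<pi>(\<theta>,e*) \<ge> min (\<pi>(\<theta>,e_low \<theta>)) (\<pi>(\<theta>,ebar)) = \<pi>(\<theta>,ebar)\<close>.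
  Only continuity and concavity of \<open>\<pi>(\<theta>,\<cdot>)\<close> are needed.\<close>

lemma Least_mem_closed_real:
  fixes S :: "real set"
  assumes "closed S" "bdd_below S" "x \<in> S"
  shows "(LEAST y. y \<in> S) \<in> S" and "(LEAST y. y \<in> S) \<le> x"
proof -
  have "S \<noteq> {}" using assms(3) by blast
  then have Inf_mem: "Inf S \<in> S"
    using assms closed_contains_Inf by blast
  have "(LEAST y. y \<in> S) = Inf S"
    by (rule Least_equality) (use Inf_mem assms(2) cInf_lower in auto)
  then show "(LEAST y. y \<in> S) \<in> S" and "(LEAST y. y \<in> S) \<le> x"
    using Inf_mem assms(2,3) cInf_lower by auto
qed

lemma strictly_concave_on_min_le:
  assumes "strictly_concave_on S f" "a \<in> S" "b \<in> S" "a \<le> x" "x \<le> b"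
  shows "min (f a) (f b) \<le> f x"
proof (cases "x = a \<or> x = b")
  case False
  then have "a < x" "x < b" using assms(4,5) by auto
  define t where "t = (b - x) / (b - a)"
  have t: "0 < t" "t < 1" using \<open>a < x\<close> \<open>x < b\<close> by (auto simp: t_def field_simps)
  have "t * (b - a) = b - x" using \<open>a < x\<close> \<open>x < b\<close> by (simp add: t_def)
  then have x_eq: "x = t * a + (1 - t) * b" by (simp add: algebra_simps)
  have "min (f a) (f b) = t * min (f a) (f b) + (1 - t) * min (f a) (f b)"
    by (simp add: algebra_simps)
  also have "\<dots> \<le> t * f a + (1 - t) * f b"
    using t by (intro add_mono mult_left_mono) auto
  also have "\<dots> < f x"
    using assms(1-3) \<open>a < x\<close> \<open>x < b\<close> t unfolding strictly_concave_on_def x_eq by auto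
  finally show ?thesis by simp
qed auto

lemma continuous_on_profit:
  assumes "continuous_on (A \<times> S \<times> S) (\<lambda>(t, e, et). pit t e et)" "t \<in> A"
  shows "continuous_on S (profit pit t)"
proof -
  have "continuous_on S (\<lambda>e. (\<lambda>(t, e, et). pit t e et) (t, e, e))"
    by (rule continuous_on_compose2[OF assms(1)]) (use assms(2) in \<open>auto intro!: continuous_intros\<close>)
  then show ?thesis by (simp add: profit_def[abs_def])
qed

lemma e_low_is_least:
  assumes "continuous_on (Eset ebar) (profit pit \<theta>)" "0 \<le> ebar"
  shows "e_low pit ebar \<theta> \<in> Eset ebar"
    and "profit pit \<theta> ebar \<le> profit pit \<theta> (e_low pit ebar \<theta>)"
    and "e \<in> Eset ebar \<Longrightarrow> profit pit \<theta> ebar \<le> profit pit \<theta> e \<Longrightarrow> e_low pit ebar \<theta> \<le> e"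
proof -
  define S where "S = Eset ebar \<inter> profit pit \<theta> -` {profit pit \<theta> ebar..}"
  have "closed S" unfolding S_def
    by (rule continuous_closed_preimage[OF assms(1)]) auto
  moreover have "bdd_below S" unfolding S_def by (rule bdd_belowI[of _ 0]) auto
  moreover have "ebar \<in> S" using assms(2) by (simp add: S_def)
  moreover have "e_low pit ebar \<theta> = (LEAST e. e \<in> S)"
    by (simp add: e_low_def S_def)
  ultimately have "e_low pit ebar \<theta> \<in> S" and "\<And>e. e \<in> S \<Longrightarrow> e_low pit ebar \<theta> \<le> e"
    using Least_mem_closed_real by metis+
  then show "e_low pit ebar \<theta> \<in> Eset ebar"
    and "profit pit \<theta> ebar \<le> profit pit \<theta> (e_low pit ebar \<theta>)"
    and "e \<in> Eset ebar \<Longrightarrow> profit pit \<theta> ebar \<le> profit pit \<theta> e \<Longrightarrow> e_low pit ebar \<theta> \<le> e"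
    by (auto simp: S_def)
qed

lemma ebar_mem_bc_set:
  assumes "0 \<le> ebar"
  shows "ebar \<in> bc_set ebar d"
  using assms by (auto simp: bc_set_def belief_compatible_def)

lemma bc_set_binary_policy:
  assumes "estar \<in> Eset ebar"
  shows "bc_set ebar (binary_policy ebar estar) = {estar, ebar}"
proof
  show "{estar, ebar} \<subseteq> bc_set ebar (binary_policy ebar estar)"
    using assms by (auto simp: bc_set_def belief_compatible_def binary_policy_def)
next
  show "bc_set ebar (binary_policy ebar estar) \<subseteq> {estar, ebar}"
  proof
    fix e assume e: "e \<in> bc_set ebar (binary_policy ebar estar)"
    show "e \<in> {estar, ebar}"
    proof (cases "e \<le> estar")
      case True
      then have "estar \<le> e"
        using e assms by (auto simp: bc_set_def belief_compatible_def binary_policy_def)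
      then show ?thesis using True by simp
    next
      case False
      then have "ebar \<le> e"
        using e assms by (auto simp: bc_set_def belief_compatible_def binary_policy_def)
      then show ?thesis using e by (simp add: bc_set_def belief_compatible_def)
    qed
  qed
qed

lemma policy_class_if_finite_bc_set:
  assumes "disclosure_policy ebar d" "finite (bc_set ebar d)" "bc_set ebar d \<noteq> {}"
  shows "d \<in> policy_class pit Theta ebar"
proof -
  have "\<exists>e\<in>bc_set ebar d. \<forall>e'\<in>bc_set ebar d. profit pit \<theta> e' \<le> profit pit \<theta> e" for \<theta>
  proof -
    let ?M = "Max (profit pit \<theta> ` bc_set ebar d)"
    have "?M \<in> profit pit \<theta> ` bc_set ebar d"
      using assms(2,3) by (intro Max_in) auto
    then obtain e where "e \<in> bc_set ebar d" "profit pit \<theta> e = ?M" by auto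
    then show ?thesis using assms(2) by (metis Max_ge finite_imageI imageI)
  qed
  then show ?thesis using assms(1) by (simp add: policy_class_def)
qed

lemma implements_imp_profit_ebar_le:
  assumes "implements pit Theta ebar \<theta> d estar" "0 \<le> ebar"
  shows "estar \<in> Eset ebar" and "profit pit \<theta> ebar \<le> profit pit \<theta> estar"
  using assms ebar_mem_bc_set
  by (auto simp: implements_def bc_set_def belief_compatible_def)

lemma implements_binary_policy:
  assumes "0 \<le> ebar" "estar \<in> Eset ebar"
    and "profit pit \<theta> ebar \<le> profit pit \<theta> estar"
  shows "implements pit Theta ebar \<theta> (binary_policy ebar estar) estar"
proof -
  have "disclosure_policy ebar (binary_policy ebar estar)"
    using assms(1,2) by (auto simp: disclosure_policy_def binary_policy_def)
  then have "binary_policy ebar estar \<in> policy_class pit Theta ebar"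
    using assms(2) by (intro policy_class_if_finite_bc_set) (simp_all add: bc_set_binary_policy)
  then show ?thesis
    using assms(2,3) by (simp add: implements_def bc_set_binary_policy)
qed

theorem proposition1:
  fixes pit :: "real \<Rightarrow> real \<Rightarrow> real \<Rightarrow> real"
    and \<theta>l \<theta>h ebar \<theta> estar :: real
  assumes ebar_pos: "ebar > 0"
    and cont: "continuous_on ({\<theta>l..\<theta>h} \<times> Eset ebar \<times> Eset ebar) (\<lambda>(t, e, et). pit t e et)"
    and C2: "C2_on (interior ({\<theta>l..\<theta>h} \<times> Eset ebar \<times> Eset ebar)) (\<lambda>(t, e, et). pit t e et)"
    and incr: "\<And>t et. t \<in> {\<theta>l..\<theta>h} \<Longrightarrow> et \<in> Eset ebar \<Longrightarrow>
                 strict_mono_on (Eset ebar) (\<lambda>e. pit t e et)"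
    and decr: "\<And>t e. t \<in> {\<theta>l..\<theta>h} \<Longrightarrow> e \<in> Eset ebar \<Longrightarrow>
                 strict_antimono_on (Eset ebar) (\<lambda>et. pit t e et)"
    and conc: "\<And>t. t \<in> {\<theta>l..\<theta>h} \<Longrightarrow> strictly_concave_on (Eset ebar) (profit pit t)"
    and ends: "\<And>t. t \<in> {\<theta>l..\<theta>h} \<Longrightarrow> profit pit t 0 < profit pit t ebar"
    and theta: "\<theta> \<in> {\<theta>l..\<theta>h}"
    and estar: "estar \<in> Eset ebar"
  shows "(implementable pit {\<theta>l..\<theta>h} ebar \<theta> estar \<longleftrightarrow> e_low pit ebar \<theta> \<le> estar)
       \<and> (e_low pit ebar \<theta> \<le> estar \<longrightarrow>
            implements pit {\<theta>l..\<theta>h} ebar \<theta> (binary_policy ebar estar) estar)"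
proof -
  let ?f = "profit pit \<theta>" and ?m = "e_low pit ebar \<theta>"
  have ebar_nonneg: "0 \<le> ebar" using ebar_pos by simp
  note e_low = e_low_is_least[OF continuous_on_profit[OF cont theta] ebar_nonneg]
  have sufficient: "implements pit {\<theta>l..\<theta>h} ebar \<theta> (binary_policy ebar estar) estar"
    if "?m \<le> estar"
  proof (rule implements_binary_policy[OF ebar_nonneg estar])
    have "min (?f ?m) (?f ebar) \<le> ?f estar"
      using strictly_concave_on_min_le[OF conc[OF theta] e_low(1)] that estar by auto
    then show "?f ebar \<le> ?f estar" using e_low(2) by linarith
  qed
  have necessary: "?m \<le> estar" if "implementable pit {\<theta>l..\<theta>h} ebar \<theta> estar"
    using that implements_imp_profit_ebar_le[OF _ ebar_nonneg] e_low(3)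
    unfolding implementable_def by blast
  show ?thesis using sufficient necessary unfolding implementable_def by blast
qed

end
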